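(* Let $F:\mathbb{R}\to[0,1]$ be a distribution function, let $0<\lambda\le1$ and $\alpha\in(0,1)$, and put $\xi=F^{\wedge}(\alpha)$, $\eta=F^{\vee}(\alpha)$ and $A^{+}_{\lambda,\alpha}=\{x\in\mathbb{R}:x>\xi,\ F_\lambda(x)\le\alpha\}$. (i) If $\xi<\eta$, then $F(\xi)=\alpha=F(\eta-)$, $\alpha\notin\bigcup_{x\in J_F}\big(F(x-),F(x)\big)$, the set $\{x\in\mathbb{R}:x>\xi,\ F(x)=\alpha\}$ is non-empty, the restriction $F|_{A^{+}_{\lambda,\alpha}}$ is continuous, and \[A^{+}_{\lambda,\alpha}=\{x\in\mathbb{R}:x>\xi,\ F(x)=\alpha\}=\begin{cases}(\xi,\eta)&\text{if }F(\eta)>\alpha,\\(\xi,\eta]&\text{if }F(\eta)=\alpha.\end{cases}\] (ii) If $\xi=\eta$, then $A^{+}_{\lambda,\alpha}=\emptyset$. (iii) $J_F=\{x\in\mathbb{R}:F^{\wedge}(u)=x=F^{\vee}(u)\text{ and }\Delta F(F^{\wedge}(u))>0\text{ for some }u\in(0,1)\}=\{x\in\mathbb{R}:F^{\wedge}(u)=x=F^{\vee}(u)\text{ and }\Delta F(F^{\vee}(u))>0\text{ for some }u\in(0,1)\}$. Moreover, the following are equivalent: (a) $0<\Delta F^{\wedge}(\alpha)=\eta-\xi$; (b) $\{x\in\mathbb{R}:x>\xi,\ F(x)=\alpha\}\neq\emptyset$.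
   Context: A distribution function is a non-decreasing, right-continuous $F:\mathbb{R}\to[0,1]$ with limits $0$ at $-\infty$ and $1$ at $+\infty$. $F(x-)=\lim_{z\uparrow x}F(z)$, $\Delta F(x)=F(x)-F(x-)$, $J_F=\{x:\Delta F(x)>0\}$, $F_\lambda(x)=F(x-)+\lambda\Delta F(x)$. For $\alpha\in(0,1)$: $F^{\wedge}(\alpha)=\inf\{x:F(x)\ge\alpha\}$ (left quantile, a left-continuous non-decreasing function on $(0,1)$) and $F^{\vee}(\alpha)=\inf\{x:F(x)>\alpha\}=\sup\{x:F(x)\le\alpha\}=F^{\wedge}(\alpha+)$ (right quantile). The jump of $F^{\wedge}$ at $\alpha$ is $\Delta F^{\wedge}(\alpha)=F^{\wedge}(\alpha+)-F^{\wedge}(\alpha)=F^{\vee}(\alpha)-F^{\wedge}(\alpha)$. *)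

theory Defs
  imports Complex_Main
begin

definition distfun :: "(real \<Rightarrow> real) \<Rightarrow> bool" where
  "distfun F \<longleftrightarrow> mono F \<and> (\<forall>x. 0 \<le> F x \<and> F x \<le> 1)
     \<and> (\<forall>x. continuous (at_right x) F)
     \<and> (F \<longlongrightarrow> 0) at_bot \<and> (F \<longlongrightarrow> 1) at_top"

definition lft :: "(real \<Rightarrow> real) \<Rightarrow> real \<Rightarrow> real" where
  "lft F x = Lim (at_left x) F"

definition jump :: "(real \<Rightarrow> real) \<Rightarrow> real \<Rightarrow> real" where
  "jump F x = F x - lft F x"

definition jumps :: "(real \<Rightarrow> real) \<Rightarrow> real set" where
  "jumps F = {x. jump F x > 0}"

definition Flam :: "(real \<Rightarrow> real) \<Rightarrow> real \<Rightarrow> real \<Rightarrow> real" where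
  "Flam F l x = lft F x + l * jump F x"

definition lquant :: "(real \<Rightarrow> real) \<Rightarrow> real \<Rightarrow> real" where
  "lquant F a = Inf {x. F x \<ge> a}"

definition rquant :: "(real \<Rightarrow> real) \<Rightarrow> real \<Rightarrow> real" where
  "rquant F a = Inf {x. F x > a}"

definition qjump :: "(real \<Rightarrow> real) \<Rightarrow> real \<Rightarrow> real" where
  "qjump F a = Lim (at_right a) (lquant F) - lquant F a"

definition Aplus :: "(real \<Rightarrow> real) \<Rightarrow> real \<Rightarrow> real \<Rightarrow> real set" where
  "Aplus F l a = {x. x > lquant F a \<and> Flam F l x \<le> a}"

end

theory Submission imports Defs "HOL-Analysis.Analysis" begin

text \<open>
  Just above \<open>\<xi> = F\<^sup>\<and>(\<alpha>)\<close> the function \<open>F\<close> is \<open>\<ge> \<alpha>\<close>, and just below \<open>\<eta> = F\<^sup>\<or>(\<alpha>)\<close> it is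
  \<open>\<le> \<alpha>\<close>; so \<open>F = \<alpha>\<close> on \<open>(\<xi>, \<eta>)\<close>, and the level set \<open>{x > \<xi>. F(x) = \<alpha>}\<close> lies between
  \<open>(\<xi>, \<eta>)\<close> and \<open>(\<xi>, \<eta>]\<close>, being non-empty iff \<open>\<xi> < \<eta>\<close>. For \<open>x > \<xi>\<close> also \<open>F(x-) \<ge> \<alpha>\<close>,
  so \<open>F\<^sub>\<lambda>(x) \<le> \<alpha>\<close> forces \<open>F(x-) = F(x) = \<alpha>\<close> as soon as \<open>\<lambda> > 0\<close>: \<open>A\<^sup>+\<close> is that level set. Every level \<open>u\<close> strictly inside the gap
  \<open>(F(x-), F(x))\<close> at a jump has \<open>F\<^sup>\<and>(u) = x = F\<^sup>\<or>(u)\<close>; this describes \<open>J\<^sub>F\<close> and keeps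
  \<open>\<alpha>\<close> out of all gaps when \<open>\<xi> < \<eta>\<close>. Finally \<open>F\<^sup>\<and>(\<alpha>+) = F\<^sup>\<or>(\<alpha>)\<close>, so \<open>\<Delta>F\<^sup>\<and>(\<alpha>) = \<eta> - \<xi>\<close>.
\<close>

lemma distfun_mono: "distfun F \<Longrightarrow> x \<le> y \<Longrightarrow> F x \<le> F y"
  unfolding distfun_def by (auto dest: monoD)

lemma distfun_nonneg: "distfun F \<Longrightarrow> 0 \<le> F x"
  unfolding distfun_def by simp

lemma distfun_le_one: "distfun F \<Longrightarrow> F x \<le> 1"
  unfolding distfun_def by simp

lemma distfun_bdd_below:
  assumes "distfun F" "0 < u"
  shows "bdd_below {x. u \<le> F x}"
proof -
  have "(F \<longlongrightarrow> 0) at_bot" using assms(1) unfolding distfun_def by simp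
  hence "eventually (\<lambda>x. F x < u) at_bot" using assms(2) by (simp add: order_tendstoD(2))
  then obtain N where "\<And>x. x \<le> N \<Longrightarrow> F x < u" unfolding eventually_at_bot_linorder by blast
  hence "\<forall>x\<in>{x. u \<le> F x}. N \<le> x" by (meson linorder_not_less mem_Collect_eq nle_le)
  thus ?thesis unfolding bdd_below_def by blast
qed

lemma distfun_bdd_below_strict: "distfun F \<Longrightarrow> 0 < u \<Longrightarrow> bdd_below {x. u < F x}"
  by (rule bdd_below_mono[OF distfun_bdd_below]) auto

lemma distfun_exceeds:
  assumes "distfun F" "u < 1"
  shows "\<exists>x. u < F x"
proof -
  have "(F \<longlongrightarrow> 1) at_top" using assms(1) unfolding distfun_def by simp
  hence "eventually (\<lambda>x. u < F x) at_top" using assms(2) by (simp add: order_tendstoD(1))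
  thus ?thesis by (meson eventually_happens' trivial_limit_at_top_linorder)
qed

lemma lquant_less_imp_ge:
  assumes "distfun F" "0 < u" "u < 1" "lquant F u < x"
  shows "u \<le> F x"
proof -
  have "{x. u \<le> F x} \<noteq> {}" using distfun_exceeds[OF assms(1,3)] less_imp_le by blast
  then obtain s where "u \<le> F s" "s < x"
    using assms(4) cInf_less_iff[OF _ distfun_bdd_below[OF assms(1,2)]] unfolding lquant_def by auto
  thus ?thesis using distfun_mono[OF assms(1), of s x] by simp
qed

lemma le_F_lquant:
  assumes "distfun F" "0 < u" "u < 1"
  shows "u \<le> F (lquant F u)"
proof -
  have "(F \<longlongrightarrow> F (lquant F u)) (at_right (lquant F u))"
    using assms(1) unfolding distfun_def by (simp add: continuous_within)
  moreover have "eventually (\<lambda>x. u \<le> F x) (at_right (lquant F u))"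
    by (rule eventually_mono[OF eventually_at_right_less lquant_less_imp_ge[OF assms]])
  ultimately show ?thesis by (rule tendsto_lowerbound) simp
qed

lemma rquant_less_imp_greater:
  assumes "distfun F" "0 < u" "u < 1" "rquant F u < x"
  shows "u < F x"
proof -
  obtain s where "u < F s" "s < x"
    using assms(4) cInf_less_iff[OF _ distfun_bdd_below_strict[OF assms(1,2)]]
      distfun_exceeds[OF assms(1,3)] unfolding rquant_def by auto
  thus ?thesis using distfun_mono[OF assms(1), of s x] by simp
qed

lemma less_rquant_imp_le:
  assumes "distfun F" "0 < u" "x < rquant F u"
  shows "F x \<le> u"
  using cInf_lower[OF _ distfun_bdd_below_strict[OF assms(1,2)], of x] assms(3) unfolding rquant_def by force

lemma lquant_le_rquant:
  assumes "distfun F" "0 < u" "u < 1"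
  shows "lquant F u \<le> rquant F u"
  unfolding lquant_def rquant_def using distfun_exceeds[OF assms(1,3)]
  by (intro cInf_superset_mono distfun_bdd_below[OF assms(1,2)]) auto

lemma distfun_eq_on_quantile_gap:
  "\<lbrakk>distfun F; 0 < u; u < 1; lquant F u < x; x < rquant F u\<rbrakk> \<Longrightarrow> F x = u"
  by (meson antisym lquant_less_imp_ge less_rquant_imp_le)

lemma tendsto_lquant_at_right:
  assumes "distfun F" "0 < a" "a < 1"
  shows "(lquant F \<longlongrightarrow> rquant F a) (at_right a)"
proof (rule order_tendstoI)
  fix c assume c: "c < rquant F a"
  have le: "rquant F a \<le> lquant F u" if "u \<in> {a<..<1}" for u
    unfolding lquant_def rquant_def using that distfun_exceeds[OF assms(1), of u]
    by (intro cInf_superset_mono distfun_bdd_below_strict[OF assms(1,2)]) (auto dest: less_imp_le)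
  show "eventually (\<lambda>u. c < lquant F u) (at_right a)"
    by (rule eventually_mono[OF eventually_at_right_real[OF assms(3)]]) (use c le in fastforce)
next
  fix b assume b: "rquant F a < b"
  define x where "x = (rquant F a + b) / 2"
  have "a < F x" by (rule rquant_less_imp_greater[OF assms]) (use b in \<open>simp add: x_def\<close>)
  show "eventually (\<lambda>u. lquant F u < b) (at_right a)"
  proof (rule eventually_mono[OF eventually_at_right_real[OF \<open>a < F x\<close>]])
    fix u assume "u \<in> {a<..<F x}"
    hence "lquant F u \<le> x"
      unfolding lquant_def using assms(2) by (intro cInf_lower distfun_bdd_below[OF assms(1)]) auto
    thus "lquant F u < b" using b by (simp add: x_def)
  qed
qed

lemma qjump_eq_quantile_gap:
  "distfun F \<Longrightarrow> 0 < a \<Longrightarrow> a < 1 \<Longrightarrow> qjump F a = rquant F a - lquant F a"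
  unfolding qjump_def by (simp add: tendsto_Lim[OF _ tendsto_lquant_at_right])

lemma tendsto_lft:
  assumes "distfun F"
  shows "(F \<longlongrightarrow> lft F x) (at_left x)"
proof -
  have "(F \<longlongrightarrow> Sup (F ` ({..<x} \<inter> UNIV))) (at x within ({..<x} \<inter> UNIV))"
    by (rule Lim_left_bound[where K=1])
       (use distfun_mono[OF assms] distfun_le_one[OF assms] in auto)
  thus ?thesis unfolding lft_def by (metis inf_top_right tendsto_Lim trivial_limit_at_left_real)
qed

lemma lft_le:
  assumes "distfun F"
  shows "lft F x \<le> F x"
  by (rule tendsto_upperbound[OF tendsto_lft[OF assms]])
     (rule eventually_mono[OF eventually_at_left_real[of "x - 1" x]], auto intro: distfun_mono[OF assms])

lemma le_lft:
  assumes "distfun F" "y < x"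
  shows "F y \<le> lft F x"
  by (rule tendsto_lowerbound[OF tendsto_lft[OF assms(1)]])
     (rule eventually_mono[OF eventually_at_left_real[OF assms(2)]], auto intro: distfun_mono[OF assms(1)])

lemma lft_nonneg: "distfun F \<Longrightarrow> 0 \<le> lft F x"
  using le_lft[of F "x - 1" x] distfun_nonneg[of F "x - 1"] by simp

lemma lft_eq_const:
  assumes "distfun F" "a < x" "\<And>y. a < y \<Longrightarrow> y < x \<Longrightarrow> F y = c"
  shows "lft F x = c"
proof (rule antisym)
  show "lft F x \<le> c"
    by (rule tendsto_upperbound[OF tendsto_lft[OF assms(1)]])
       (auto intro: eventually_mono[OF eventually_at_left_real[OF assms(2)]] simp: assms(3))
  show "c \<le> lft F x"
    using le_lft[OF assms(1), of "(a + x) / 2" x] assms(3)[of "(a + x) / 2"] assms(2) by simp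
qed

lemma lquant_less_imp_le_lft:
  assumes "distfun F" "0 < u" "u < 1" "lquant F u < x"
  shows "u \<le> lft F x"
proof -
  define y where "y = (lquant F u + x) / 2"
  have "u \<le> F y" by (rule lquant_less_imp_ge[OF assms(1-3)]) (use assms(4) in \<open>simp add: y_def\<close>)
  also have "F y \<le> lft F x" by (rule le_lft[OF assms(1)]) (use assms(4) in \<open>simp add: y_def\<close>)
  finally show ?thesis .
qed

lemma quantiles_at_jump:
  assumes "distfun F" "lft F x < u" "u < F x"
  shows "lquant F u = x" "rquant F u = x"
proof -
  have u: "0 < u" "u < 1"
    using assms lft_nonneg[OF assms(1), of x] distfun_le_one[OF assms(1), of x] by linarith+
  have "\<not> lquant F u < x" using lquant_less_imp_le_lft[OF assms(1) u] assms(2) by force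
  moreover have "\<not> x < rquant F u" using less_rquant_imp_le[OF assms(1) u(1)] assms(3) by force
  ultimately show "lquant F u = x" "rquant F u = x"
    using lquant_le_rquant[OF assms(1) u] by linarith+
qed

lemma jumps_eq_quantile_coincidences:
  assumes "distfun F"
  shows "jumps F = {x. \<exists>u\<in>{0<..<1}. lquant F u = x \<and> x = rquant F u \<and> jump F x > 0}"
proof (intro set_eqI iffI)
  fix x assume "x \<in> jumps F"
  hence jx: "lft F x < F x" "jump F x > 0" unfolding jumps_def jump_def by simp_all
  define u where "u = (lft F x + F x) / 2"
  have "lft F x < u" "u < F x" using jx by (simp_all add: u_def)
  moreover from this have "u \<in> {0<..<1}"
    using lft_nonneg[OF assms, of x] distfun_le_one[OF assms, of x] by simp
  ultimately show "x \<in> {x. \<exists>u\<in>{0<..<1}. lquant F u = x \<and> x = rquant F u \<and> jump F x > 0}"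
    using quantiles_at_jump[OF assms] jx(2) by fastforce
qed (auto simp: jumps_def)

lemma Flam_le_iff_eq:
  assumes "distfun F" "0 < l" "u \<le> lft F x"
  shows "Flam F l x \<le> u \<longleftrightarrow> F x = u"
proof
  assume Flam: "Flam F l x \<le> u"
  have "0 \<le> l * (F x - lft F x)" using assms(2) lft_le[OF assms(1), of x] by simp
  hence "lft F x = u" using Flam assms(3) unfolding Flam_def jump_def by linarith
  moreover from this have "F x \<le> lft F x"
    using Flam assms(2) unfolding Flam_def jump_def by (simp add: mult_le_0_iff)
  ultimately show "F x = u" using lft_le[OF assms(1), of x] by linarith
next
  assume "F x = u"
  moreover have "lft F x = u" using \<open>F x = u\<close> assms(3) lft_le[OF assms(1), of x] by linarith
  ultimately show "Flam F l x \<le> u" unfolding Flam_def jump_def by simp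
qed

lemma Aplus_eq_level_set:
  assumes "distfun F" "0 < l" "0 < u" "u < 1"
  shows "Aplus F l u = {x. x > lquant F u \<and> F x = u}"
proof (intro set_eqI)
  fix x
  have "lquant F u < x \<Longrightarrow> Flam F l x \<le> u \<longleftrightarrow> F x = u"
    using Flam_le_iff_eq[OF assms(1,2) lquant_less_imp_le_lft[OF assms(1,3,4)]] .
  thus "x \<in> Aplus F l u \<longleftrightarrow> x \<in> {x. x > lquant F u \<and> F x = u}"
    unfolding Aplus_def by blast
qed

lemma level_set_subset_quantile_interval:
  assumes "distfun F" "0 < u" "u < 1"
  shows "{x. x > lquant F u \<and> F x = u} \<subseteq> {lquant F u<..rquant F u}"
proof
  fix x assume x: "x \<in> {x. x > lquant F u \<and> F x = u}"
  hence "\<not> rquant F u < x" using rquant_less_imp_greater[OF assms] by force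
  thus "x \<in> {lquant F u<..rquant F u}" using x by simp
qed

lemma quantile_interval_subset_level_set:
  assumes "distfun F" "0 < u" "u < 1"
  shows "{lquant F u<..<rquant F u} \<subseteq> {x. x > lquant F u \<and> F x = u}"
  using distfun_eq_on_quantile_gap[OF assms] by auto

lemma level_set_nonempty_iff:
  assumes "distfun F" "0 < u" "u < 1"
  shows "{x. x > lquant F u \<and> F x = u} \<noteq> {} \<longleftrightarrow> lquant F u < rquant F u"
proof
  assume "{x. x > lquant F u \<and> F x = u} \<noteq> {}"
  thus "lquant F u < rquant F u" using level_set_subset_quantile_interval[OF assms] by fastforce
next
  assume "lquant F u < rquant F u"
  hence "(lquant F u + rquant F u) / 2 \<in> {lquant F u<..<rquant F u}" by simp
  thus "{x. x > lquant F u \<and> F x = u} \<noteq> {}" using quantile_interval_subset_level_set[OF assms] by blast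
qed

theorem mainTheorem3:
  fixes F :: "real \<Rightarrow> real" and l \<alpha> :: real
  assumes "distfun F" and "0 < l" and "l \<le> 1" and "0 < \<alpha>" and "\<alpha> < 1"
  defines "\<xi> \<equiv> lquant F \<alpha>" and "\<eta> \<equiv> rquant F \<alpha>"
  shows "(\<xi> < \<eta> \<longrightarrow>
            F \<xi> = \<alpha> \<and> \<alpha> = lft F \<eta>
          \<and> \<alpha> \<notin> (\<Union>x\<in>jumps F. {lft F x<..<F x})
          \<and> {x. x > \<xi> \<and> F x = \<alpha>} \<noteq> {}
          \<and> continuous_on (Aplus F l \<alpha>) F
          \<and> Aplus F l \<alpha> = {x. x > \<xi> \<and> F x = \<alpha>}
          \<and> (F \<eta> > \<alpha> \<longrightarrow> {x. x > \<xi> \<and> F x = \<alpha>} = {\<xi><..<\<eta>})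
          \<and> (F \<eta> = \<alpha> \<longrightarrow> {x. x > \<xi> \<and> F x = \<alpha>} = {\<xi><..\<eta>}))
       \<and> (\<xi> = \<eta> \<longrightarrow> Aplus F l \<alpha> = {})
       \<and> jumps F = {x. \<exists>u\<in>{0<..<1}. lquant F u = x \<and> x = rquant F u \<and> jump F (lquant F u) > 0}
       \<and> jumps F = {x. \<exists>u\<in>{0<..<1}. lquant F u = x \<and> x = rquant F u \<and> jump F (rquant F u) > 0}
       \<and> ((0 < qjump F \<alpha> \<and> qjump F \<alpha> = \<eta> - \<xi>) \<longleftrightarrow> {x. x > \<xi> \<and> F x = \<alpha>} \<noteq> {})"
proof -
  note quant = assms(1,4,5)
  have A: "Aplus F l \<alpha> = {x. x > \<xi> \<and> F x = \<alpha>}"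
    unfolding \<xi>_def by (rule Aplus_eq_level_set[OF assms(1,2,4,5)])
  have nonempty: "{x. x > \<xi> \<and> F x = \<alpha>} \<noteq> {} \<longleftrightarrow> \<xi> < \<eta>"
    unfolding \<xi>_def \<eta>_def by (rule level_set_nonempty_iff[OF quant])
  have between: "{\<xi><..<\<eta>} \<subseteq> {x. x > \<xi> \<and> F x = \<alpha>}" "{x. x > \<xi> \<and> F x = \<alpha>} \<subseteq> {\<xi><..\<eta>}"
    unfolding \<xi>_def \<eta>_def by (rule quantile_interval_subset_level_set[OF quant], rule level_set_subset_quantile_interval[OF quant])
  have flat: "F y = \<alpha>" if "\<xi> < y" "y < \<eta>" for y using between(1) that by auto
  have "F \<xi> = \<alpha>" if "\<xi> < \<eta>"
    using flat[of "(\<xi> + \<eta>) / 2"] distfun_mono[OF assms(1), of \<xi> "(\<xi> + \<eta>) / 2"]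
      le_F_lquant[OF quant] that unfolding \<xi>_def by simp
  moreover have "\<alpha> = lft F \<eta>" if "\<xi> < \<eta>" using lft_eq_const[OF assms(1) that flat] by simp
  moreover have "\<alpha> \<notin> (\<Union>x\<in>jumps F. {lft F x<..<F x})" if "\<xi> < \<eta>"
    using quantiles_at_jump[OF assms(1)] that unfolding \<xi>_def \<eta>_def by fastforce
  moreover have "continuous_on (Aplus F l \<alpha>) F"
    by (rule continuous_on_cong[THEN iffD2, OF refl _ continuous_on_const]) (use A in auto)
  moreover have "F \<eta> > \<alpha> \<Longrightarrow> {x. x > \<xi> \<and> F x = \<alpha>} = {\<xi><..<\<eta>}"
    and "F \<eta> = \<alpha> \<Longrightarrow> {x. x > \<xi> \<and> F x = \<alpha>} = {\<xi><..\<eta>}"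
    using between by (fastforce simp: less_le)+
  moreover have "jumps F = {x. \<exists>u\<in>{0<..<1}. lquant F u = x \<and> x = rquant F u \<and> jump F (lquant F u) > 0}"
    and "jumps F = {x. \<exists>u\<in>{0<..<1}. lquant F u = x \<and> x = rquant F u \<and> jump F (rquant F u) > 0}"
    using jumps_eq_quantile_coincidences[OF assms(1)] by auto
  moreover have "qjump F \<alpha> = \<eta> - \<xi>"
    unfolding \<xi>_def \<eta>_def by (rule qjump_eq_quantile_gap[OF quant])
  ultimately show ?thesis using A nonempty by (intro conjI impI) auto
qed

end
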